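(* Let $G=(V,E)$ be a digraph and let $(X,T)$ be a tree decomposition of its underlying undirected graph, with bags $X_1,\dots,X_n$. For each bag $X_i$ let $V_i=X_i\cup\{u\in V:(u,v)\in E\text{ for some }v\in X_i\}$ be the set of vertices of $X_i$ together with all their in-neighbors. Then for every $v\in V$, the set $X^v=\{X_i: v\in V_i\}$ of bags forms a connected subtree of $T$.
   Context: A tree decomposition of an undirected graph $H$ is a pair $(X,T)$ where $X=\{X_1,\dots,X_n\}$ is a collection of vertex subsets and $T$ is a tree on $X$ such that: every vertex lies in some $X_i$; for every edge $\{u,v\}$ some $X_i$ contains both $u$ and $v$; and for every vertex $v$ the bags containing $v$ form a connected subtree of $T$. The underlying graph of a digraph is obtained by treating arcs as undirected edges. *)

theory Defs
  imports Main
begin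

definition digraph :: "'a set \<Rightarrow> ('a \<times> 'a) set \<Rightarrow> bool" where
  "digraph V E \<longleftrightarrow> E \<subseteq> V \<times> V"

definition underlying_edges :: "('a \<times> 'a) set \<Rightarrow> 'a set set" where
  "underlying_edges E = {{u, v} | u v. (u, v) \<in> E}"

definition connected_in :: "'b set set \<Rightarrow> 'b set \<Rightarrow> bool" where
  "connected_in T S \<longleftrightarrow> S \<noteq> {} \<and>
     (\<forall>i\<in>S. \<forall>j\<in>S. (i, j) \<in> {(x, y). {x, y} \<in> T \<and> x \<in> S \<and> y \<in> S}\<^sup>*)"

text \<open>A (finite) tree on node set I with edge set T: connected, and acyclic
  (every edge is a bridge, i.e. deleting it disconnects the graph).\<close>
definition is_tree :: "'b set \<Rightarrow> 'b set set \<Rightarrow> bool" where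
  "is_tree I T \<longleftrightarrow> finite I \<and>
     T \<subseteq> {{i, j} | i j. i \<in> I \<and> j \<in> I \<and> i \<noteq> j} \<and>
     connected_in T I \<and>
     (\<forall>e\<in>T. \<not> connected_in (T - {e}) I)"

definition tree_decomposition ::
  "'a set \<Rightarrow> 'a set set \<Rightarrow> 'b set \<Rightarrow> ('b \<Rightarrow> 'a set) \<Rightarrow> 'b set set \<Rightarrow> bool" where
  "tree_decomposition V F I X T \<longleftrightarrow>
     is_tree I T \<and>
     (\<forall>i\<in>I. X i \<subseteq> V) \<and>
     (\<forall>v\<in>V. \<exists>i\<in>I. v \<in> X i) \<and>
     (\<forall>e\<in>F. \<exists>i\<in>I. e \<subseteq> X i) \<and>
     (\<forall>v\<in>V. connected_in T {i \<in> I. v \<in> X i})"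

definition bag_with_in_nbrs :: "'a set \<Rightarrow> ('a \<times> 'a) set \<Rightarrow> 'a set \<Rightarrow> 'a set" where
  "bag_with_in_nbrs V E B = B \<union> {u \<in> V. \<exists>v\<in>B. (u, v) \<in> E}"

end

theory Submission
  imports Defs
begin

text \<open>A vertex \<open>v\<close> lies in \<open>V\<^sub>i\<close> exactly when \<open>X\<^sub>i\<close> contains \<open>v\<close> or an
  out-neighbour \<open>w\<close> of \<open>v\<close>.  So the bags in question form the union of the subtrees
  of \<open>v\<close> and of its out-neighbours; the subtree of each \<open>w\<close> meets that of \<open>v\<close> in a
  bag covering the arc \<open>(v, w)\<close>, hence the union is connected through the subtree of \<open>v\<close>.\<close>

lemma rtrancl_induced_edges_mono:
  assumes "(i, j) \<in> {(x, y). {x, y} \<in> T \<and> x \<in> S \<and> y \<in> S}\<^sup>*" and "S \<subseteq> S'"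
  shows "(i, j) \<in> {(x, y). {x, y} \<in> T \<and> x \<in> S' \<and> y \<in> S'}\<^sup>*"
proof -
  have "{(x, y). {x, y} \<in> T \<and> x \<in> S \<and> y \<in> S} \<subseteq> {(x, y). {x, y} \<in> T \<and> x \<in> S' \<and> y \<in> S'}"
    using assms(2) by auto
  then show ?thesis
    using assms(1) rtrancl_mono by blast
qed

lemma connected_in_UN_hub:
  assumes hub: "c \<in> W"
    and conn: "\<And>w. w \<in> W \<Longrightarrow> connected_in T (A w)"
    and meets: "\<And>w. w \<in> W \<Longrightarrow> A w \<inter> A c \<noteq> {}"
  shows "connected_in T (\<Union>w\<in>W. A w)"
proof -
  define U where "U = (\<Union>w\<in>W. A w)"
  let ?R = "{(x, y). {x, y} \<in> T \<and> x \<in> U \<and> y \<in> U}"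
  have within: "(i, j) \<in> ?R\<^sup>*" if "w \<in> W" "i \<in> A w" "j \<in> A w" for w i j
  proof -
    have "(i, j) \<in> {(x, y). {x, y} \<in> T \<and> x \<in> A w \<and> y \<in> A w}\<^sup>*"
      using conn[OF \<open>w \<in> W\<close>] that(2,3) unfolding connected_in_def by blast
    then show ?thesis
      by (rule rtrancl_induced_edges_mono) (use \<open>w \<in> W\<close> in \<open>auto simp: U_def\<close>)
  qed
  have via_hub: "\<exists>k \<in> A c. (i, k) \<in> ?R\<^sup>* \<and> (k, i) \<in> ?R\<^sup>*" if "w \<in> W" "i \<in> A w" for w i
  proof -
    obtain k where "k \<in> A w" "k \<in> A c"
      using meets[OF \<open>w \<in> W\<close>] by blast
    then show ?thesis
      using within[OF that] within[OF \<open>w \<in> W\<close> _ \<open>i \<in> A w\<close>] by blast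
  qed
  have "(i, j) \<in> ?R\<^sup>*" if "i \<in> U" "j \<in> U" for i j
  proof -
    obtain k where k: "k \<in> A c" "(i, k) \<in> ?R\<^sup>*"
      using \<open>i \<in> U\<close> via_hub unfolding U_def by blast
    obtain k' where k': "k' \<in> A c" "(k', j) \<in> ?R\<^sup>*"
      using \<open>j \<in> U\<close> via_hub unfolding U_def by blast
    show ?thesis
      using k(2) within[OF hub k(1) k'(1)] k'(2) by (meson rtrancl_trans)
  qed
  moreover have "U \<noteq> {}"
    using meets[OF hub] hub unfolding U_def by blast
  ultimately show ?thesis
    unfolding connected_in_def U_def by blast
qed

lemma bag_with_in_nbrs_occurrences:
  assumes "v \<in> V"
  shows "{i \<in> I. v \<in> bag_with_in_nbrs V E (X i)} = (\<Union>w\<in>insert v (E `` {v}). {i \<in> I. w \<in> X i})"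
  using assms unfolding bag_with_in_nbrs_def by auto

theorem lemmaA1:
  fixes V :: "'a set" and E :: "('a \<times> 'a) set"
    and I :: "'b set" and X :: "'b \<Rightarrow> 'a set" and T :: "'b set set"
  assumes "digraph V E"
    and "tree_decomposition V (underlying_edges E) I X T"
  shows "\<forall>v\<in>V. connected_in T {i \<in> I. v \<in> bag_with_in_nbrs V E (X i)}"
proof
  fix v assume "v \<in> V"
  have bags_connected: "\<forall>w\<in>V. connected_in T {i \<in> I. w \<in> X i}"
    and edges_covered: "\<forall>e\<in>underlying_edges E. \<exists>i\<in>I. e \<subseteq> X i"
    using assms(2) unfolding tree_decomposition_def by simp_all
  let ?W = "insert v (E `` {v})"
  have "?W \<subseteq> V"
    using assms(1) \<open>v \<in> V\<close> unfolding digraph_def by auto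
  then have conn: "connected_in T {i \<in> I. w \<in> X i}" if "w \<in> ?W" for w
    using bags_connected that by blast
  have meets: "{i \<in> I. w \<in> X i} \<inter> {i \<in> I. v \<in> X i} \<noteq> {}" if "w \<in> ?W" for w
  proof (cases "w = v")
    case True
    then show ?thesis
      using conn[OF that] unfolding connected_in_def by simp
  next
    case False
    then have "{v, w} \<in> underlying_edges E"
      using that unfolding underlying_edges_def by auto
    then obtain i where "i \<in> I" "{v, w} \<subseteq> X i"
      using edges_covered by blast
    then show ?thesis
      by blast
  qed
  show "connected_in T {i \<in> I. v \<in> bag_with_in_nbrs V E (X i)}"
    unfolding bag_with_in_nbrs_occurrences[OF \<open>v \<in> V\<close>]
    using connected_in_UN_hub[of v ?W T "\<lambda>w. {i \<in> I. w \<in> X i}", OF insertI1 conn meets] .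
qed

end
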